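(* Let $A$ be an MV-algebra and $d$ a $(\odot,\vee)$-derivation on $A$. The following are equivalent: (1) $d=\mathrm{Id}_A$; (2) $d(1)=1$; (3) $d(a)=1$ for some $a\in A$; (4) $d$ is surjective; (5) $d(x\oplus y)=(d(x)\oplus y)\wedge(x\oplus d(y))$ for all $x,y\in A$.
   Context: An MV-algebra is an algebra $(A,\oplus,{}^*,0)$ of type $(2,1,0)$ satisfying: $x\oplus(y\oplus z)=(x\oplus y)\oplus z$, $x\oplus y=y\oplus x$, $x\oplus 0=x$, $x^{**}=x$, $x\oplus 0^*=0^*$, $(x^*\oplus y)^*\oplus y=(y^*\oplus x)^*\oplus x$. Put $1=0^*$ and $x\odot y=(x^*\oplus y^* )^*$. The natural order is $x\le y$ iff $x^*\oplus y=1$, with lattice operations $x\vee y=(x\odot y^* )\oplus y$, $x\wedge y=x\odot(x^*\oplus y)$. A $(\odot,\vee)$-derivation on $A$ is a map $d:A\to A$ with $d(x\odot y)=(d(x)\odot y)\vee(x\odot d(y))$ for all $x,y\in A$. *)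

theory Defs
  imports Main
begin

locale mv_algebra =
  fixes oplus :: "'a \<Rightarrow> 'a \<Rightarrow> 'a"
    and neg :: "'a \<Rightarrow> 'a"
    and zero :: "'a"
  assumes assoc: "oplus x (oplus y z) = oplus (oplus x y) z"
    and comm: "oplus x y = oplus y x"
    and zero_neutral: "oplus x zero = x"
    and neg_neg: "neg (neg x) = x"
    and absorb: "oplus x (neg zero) = neg zero"
    and luk: "oplus (neg (oplus (neg x) y)) y = oplus (neg (oplus (neg y) x)) x"

definition mv_one :: "('a \<Rightarrow> 'a) \<Rightarrow> 'a \<Rightarrow> 'a" where
  "mv_one neg zero = neg zero"

definition mv_odot :: "('a \<Rightarrow> 'a \<Rightarrow> 'a) \<Rightarrow> ('a \<Rightarrow> 'a) \<Rightarrow> 'a \<Rightarrow> 'a \<Rightarrow> 'a" where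
  "mv_odot oplus neg x y = neg (oplus (neg x) (neg y))"

definition mv_join :: "('a \<Rightarrow> 'a \<Rightarrow> 'a) \<Rightarrow> ('a \<Rightarrow> 'a) \<Rightarrow> 'a \<Rightarrow> 'a \<Rightarrow> 'a" where
  "mv_join oplus neg x y = oplus (mv_odot oplus neg x (neg y)) y"

definition mv_meet :: "('a \<Rightarrow> 'a \<Rightarrow> 'a) \<Rightarrow> ('a \<Rightarrow> 'a) \<Rightarrow> 'a \<Rightarrow> 'a \<Rightarrow> 'a" where
  "mv_meet oplus neg x y = mv_odot oplus neg x (oplus (neg x) y)"

definition odot_join_derivation ::
  "('a \<Rightarrow> 'a \<Rightarrow> 'a) \<Rightarrow> ('a \<Rightarrow> 'a) \<Rightarrow> ('a \<Rightarrow> 'a) \<Rightarrow> bool" where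
  "odot_join_derivation oplus neg d \<longleftrightarrow>
     (\<forall>x y. d (mv_odot oplus neg x y) =
        mv_join oplus neg (mv_odot oplus neg (d x) y) (mv_odot oplus neg x (d y)))"

end

theory Submission
  imports Defs
begin

text \<open>Every \<open>(\<odot>,\<or>)\<close>-derivation is decreasing: \<open>x \<odot> x\<^sup>* = 0\<close> and \<open>d 0 = 0\<close>, so the
  derivation rule gives \<open>d x \<odot> x\<^sup>* = 0\<close>, i.e. \<open>d x \<le> x\<close>. Hence \<open>d a = 1\<close> forces \<open>a = 1\<close>,
  and once \<open>d 1 = 1\<close> the rule for \<open>x \<odot> 1\<close> reads \<open>d x = d x \<or> x = x\<close>. Conversely the identity
  is surjective and satisfies the \<open>(\<oplus>,\<and>)\<close>-rule because \<open>\<and>\<close> is idempotent, and both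
  surjectivity and the \<open>(\<oplus>,\<and>)\<close>-rule at \<open>x = y = 1\<close> yield a preimage of \<open>1\<close>.\<close>

context mv_algebra
begin

lemma one_oplus: "oplus (neg zero) x = neg zero"
  using absorb comm by metis

lemma zero_oplus: "oplus zero x = x"
  using zero_neutral comm by metis

lemma neg_oplus_self: "oplus (neg x) x = neg zero"
proof -
  have "oplus (neg (oplus (neg (neg zero)) x)) x = oplus (neg (oplus (neg x) (neg zero))) (neg zero)"
    by (rule luk)
  then show ?thesis by (simp add: neg_neg zero_oplus absorb)
qed

lemma oplus_eq_zeroD: "oplus u x = zero \<Longrightarrow> x = zero"
proof -
  assume "oplus u x = zero"
  moreover have "oplus (neg x) (oplus u x) = neg zero"
    by (metis assoc comm neg_oplus_self one_oplus)
  ultimately have "neg x = neg zero" by (simp add: zero_neutral)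
  then show "x = zero" by (metis neg_neg)
qed

lemma mv_odot_zero_left: "mv_odot oplus neg zero x = zero"
  unfolding mv_odot_def by (simp add: one_oplus neg_neg)

lemma mv_odot_zero_right: "mv_odot oplus neg x zero = zero"
  unfolding mv_odot_def by (simp add: absorb neg_neg)

lemma mv_odot_one_right: "mv_odot oplus neg x (neg zero) = x"
  unfolding mv_odot_def by (simp add: neg_neg zero_neutral)

lemma mv_odot_neg_self: "mv_odot oplus neg x (neg x) = zero"
  unfolding mv_odot_def by (metis neg_neg comm neg_oplus_self)

lemma mv_join_commute: "mv_join oplus neg x y = mv_join oplus neg y x"
  unfolding mv_join_def mv_odot_def by (simp add: neg_neg luk)

lemma mv_join_eq_zeroD: "mv_join oplus neg x y = zero \<Longrightarrow> x = zero"
  by (metis mv_join_commute mv_join_def oplus_eq_zeroD)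

lemma mv_join_absorb_below: "oplus (neg x) y = neg zero \<Longrightarrow> mv_join oplus neg x y = y"
  unfolding mv_join_def mv_odot_def by (simp add: neg_neg zero_oplus)

lemma mv_meet_idem: "mv_meet oplus neg x x = x"
  unfolding mv_meet_def mv_odot_def by (simp add: neg_oplus_self neg_neg zero_neutral)

end

locale mv_derivation = mv_algebra +
  fixes d :: "'a \<Rightarrow> 'a"
  assumes derivation: "odot_join_derivation oplus neg d"
begin

lemma derivation_odot:
  "d (mv_odot oplus neg x y) =
     mv_join oplus neg (mv_odot oplus neg (d x) y) (mv_odot oplus neg x (d y))"
  using derivation unfolding odot_join_derivation_def by blast

lemma derivation_zero: "d zero = zero"
proof -
  have "d zero = d (mv_odot oplus neg zero zero)" by (simp add: mv_odot_zero_left)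
  also have "\<dots> = mv_join oplus neg zero zero"
    using derivation_odot[of zero zero] by (simp only: mv_odot_zero_left mv_odot_zero_right)
  also have "\<dots> = zero" unfolding mv_join_def by (simp add: mv_odot_zero_left zero_neutral)
  finally show ?thesis .
qed

lemma derivation_decreasing: "oplus (neg (d x)) x = neg zero"
proof -
  have "mv_join oplus neg (mv_odot oplus neg (d x) (neg x)) (mv_odot oplus neg x (d (neg x))) = zero"
    using derivation_odot[of x "neg x"] by (simp add: mv_odot_neg_self derivation_zero)
  then have "mv_odot oplus neg (d x) (neg x) = zero" by (rule mv_join_eq_zeroD)
  then show ?thesis unfolding mv_odot_def by (metis neg_neg)
qed

lemma derivation_eq_one_imp: "d a = neg zero \<Longrightarrow> a = neg zero"
  using derivation_decreasing[of a] by (simp add: neg_neg zero_oplus)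

lemma derivation_fixes_one_imp_id:
  assumes "d (neg zero) = neg zero"
  shows "d = id"
proof
  fix x
  have "d x = d (mv_odot oplus neg x (neg zero))" by (simp add: mv_odot_one_right)
  also have "\<dots> = mv_join oplus neg (d x) x"
    using derivation_odot[of x "neg zero"] by (simp only: assms mv_odot_one_right)
  also have "\<dots> = x" by (rule mv_join_absorb_below[OF derivation_decreasing])
  finally show "d x = id x" by simp
qed

lemma oplus_meet_rule_imp_fixes_one:
  assumes "\<forall>x y. d (oplus x y) = mv_meet oplus neg (oplus (d x) y) (oplus x (d y))"
  shows "d (neg zero) = neg zero"
  using assms[rule_format, of "neg zero" "neg zero"] by (simp add: absorb one_oplus mv_meet_idem)

end

theorem proposition3p4:
  fixes oplus :: "'a \<Rightarrow> 'a \<Rightarrow> 'a" and neg :: "'a \<Rightarrow> 'a" and zero :: 'a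
    and d :: "'a \<Rightarrow> 'a"
  assumes "mv_algebra oplus neg zero"
    and "odot_join_derivation oplus neg d"
  shows "(d = id \<longleftrightarrow> d (mv_one neg zero) = mv_one neg zero)
       \<and> (d (mv_one neg zero) = mv_one neg zero \<longleftrightarrow> (\<exists>a. d a = mv_one neg zero))
       \<and> ((\<exists>a. d a = mv_one neg zero) \<longleftrightarrow> surj d)
       \<and> (surj d \<longleftrightarrow>
           (\<forall>x y. d (oplus x y) = mv_meet oplus neg (oplus (d x) y) (oplus x (d y))))"
proof -
  interpret mv_derivation oplus neg zero d
    using assms by (simp add: mv_derivation_def mv_derivation_axioms_def)
  have one_imp_id: "\<exists>a. d a = neg zero \<Longrightarrow> d = id"
    using derivation_eq_one_imp derivation_fixes_one_imp_id by blast
  have id_meet_rule: "d = id \<Longrightarrow> \<forall>x y. d (oplus x y) = mv_meet oplus neg (oplus (d x) y) (oplus x (d y))"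
    by (simp add: mv_meet_idem)
  have surj_imp_one: "surj d \<Longrightarrow> \<exists>a. d a = neg zero"
    by (metis surjD)
  show ?thesis unfolding mv_one_def
    using one_imp_id id_meet_rule surj_imp_one oplus_meet_rule_imp_fixes_one surj_id by metis
qed

end
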